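(* Let $D$ be a demicap in $AG(4,3)$ with anchor point $a$. Then among the $71$ points of $AG(4,3)\setminus D$: the anchor point $a$ completes exactly five lines with pairs of points of $D$; exactly $40$ points complete exactly one line with a pair of points of $D$; and the remaining $30$ points complete no line with a pair of points of $D$.
   Context: $AG(4,3)$ is the affine space $\mathbb{F}_3^4$; a line is a set of three distinct points $\{x,y,z\}$ with $x+y+z=0$. A cap is a set of points containing no line. A hyperplane is a $3$-dimensional affine subspace of $\mathbb{F}_3^4$; a set of points is co-hyperplanar if it lies in a common hyperplane. For a point $a$, an $a$-line is a pair of points $\{b,c\}$ such that $\{a,b,c\}$ is a line. A demicap with anchor point $a$ is a cap consisting of the $10$ points of five $a$-lines such that no four of these five $a$-lines are co-hyperplanar. For a set $S$ and a point $p\notin S$, $p$ completes a line with a pair of points of $S$ if there are distinct $x,y\in S$ with $\{p,x,y\}$ a line; the number of lines $p$ completes with $S$ is the number of such unordered pairs $\{x,y\}$. *)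

theory Defs
  imports "HOL-Analysis.Finite_Cartesian_Product" "HOL-Library.Numeral_Type"
begin

text \<open>Points of AG(4,3) are vectors in F_3^4, modelled as the type 3 ^ 4
  (the numeral type 3 is the ring Z/3Z).\<close>

type_synonym pt = "3 ^ 4"

definition is_line :: "pt set \<Rightarrow> bool" where
  "is_line L \<longleftrightarrow> (\<exists>x y z. L = {x, y, z} \<and> x \<noteq> y \<and> y \<noteq> z \<and> x \<noteq> z \<and> x + y + z = 0)"

definition cap :: "pt set \<Rightarrow> bool" where
  "cap S \<longleftrightarrow> \<not> (\<exists>L. L \<subseteq> S \<and> is_line L)"

definition hyperplane :: "pt set \<Rightarrow> bool" where
  "hyperplane H \<longleftrightarrow> (\<exists>(u::pt) (c::3). u \<noteq> 0 \<and> H = {x. (\<Sum>i\<in>UNIV. u $ i * x $ i) = c})"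

definition cohyperplanar :: "pt set \<Rightarrow> bool" where
  "cohyperplanar S \<longleftrightarrow> (\<exists>H. hyperplane H \<and> S \<subseteq> H)"

definition a_line :: "pt \<Rightarrow> pt set \<Rightarrow> bool" where
  "a_line a P \<longleftrightarrow> (\<exists>b c. P = {b, c} \<and> b \<noteq> c \<and> is_line {a, b, c})"

definition demicap :: "pt set \<Rightarrow> pt \<Rightarrow> bool" where
  "demicap D a \<longleftrightarrow> cap D \<and> card D = 10 \<and>
     (\<exists>Ls. card Ls = 5 \<and> (\<forall>P\<in>Ls. a_line a P) \<and> D = \<Union>Ls \<and>
        (\<forall>Fs. Fs \<subseteq> Ls \<and> card Fs = 4 \<longrightarrow> \<not> cohyperplanar (\<Union>Fs)))"

definition lines_completed :: "pt \<Rightarrow> pt set \<Rightarrow> nat" where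
  "lines_completed p S = card {P. P \<subseteq> S \<and> a_line p P}"

end

(*
  Write the five a-lines as {a + v, a - v}. Any pair {b, c} of points completes a line exactly
  with its third point -(b + c). The five a-lines all have third point a; the other 45 - 5 = 40
  pairs of D have third points outside D (D is a cap) and different from a, and these 40 points
  are pairwise distinct: if x + y = x' + y' for two such pairs, the non-cohyperplanarity of any
  four of the a-lines yields a linear functional that is 1 on x - a and vanishes on the
  directions of the other a-lines involved, and evaluating it on both sides gives a
  contradiction. So 40 points complete exactly one line and the other 81 - 10 - 1 - 40 = 30
  points complete none.
*)
theory Submission
  imports Defs "HOL-Library.FuncSet"
begin

lemma triple_eq_zero_3: "(z::3) + z + z = 0"
proof -
  have three: "(3::3) = 0" by simp
  have "z + z + z = 3 * z" by simp
  also have "\<dots> = 0" by (simp only: three) simp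
  finally show ?thesis .
qed

lemma triple_eq_zero: "(x::pt) + x + x = 0"
  unfolding vec_eq_iff by (simp only: vector_add_component zero_index triple_eq_zero_3 simp_thms)

lemma neg_double_eq_self: "- x - x = (x::pt)"
proof -
  have "- x - x = - (x + x)" by simp
  also have "\<dots> = x" using triple_eq_zero[of x] by (simp only: neg_eq_iff_add_eq_0)
  finally show ?thesis .
qed

lemma partner_diff: "(- a - x) - a = - (x - (a::pt))"
  using neg_double_eq_self[of a] by (simp add: algebra_simps)

lemma double_add_eq_zero_imp_eq: "(x::pt) + x + y = 0 \<Longrightarrow> y = x"
  using triple_eq_zero[of x] by (metis add_left_cancel)

lemma add_add_eq_0_imp:
  fixes p b c :: "'a::ab_group_add"
  assumes "p + b + c = 0"
  shows "c = - p - b" and "b = - p - c"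
  using assms by (metis add_eq_0_iff diff_conv_add_uminus minus_add_distrib,
      metis add.commute add.left_commute add_eq_0_iff diff_conv_add_uminus minus_add_distrib)

lemma is_line_insert_iff:
  "is_line {p, b, c} \<longleftrightarrow> p \<noteq> b \<and> b \<noteq> c \<and> p \<noteq> c \<and> p + b + c = 0"
proof
  assume "is_line {p, b, c}"
  then obtain x y z where e: "{p, b, c} = {x, y, z}" and d: "x \<noteq> y" "y \<noteq> z" "x \<noteq> z"
    and s: "x + y + z = 0"
    unfolding is_line_def by blast
  have "card {p, b, c} = 3" using e d by simp
  then have dd: "p \<noteq> b \<and> b \<noteq> c \<and> p \<noteq> c" by (auto simp: card_insert_if split: if_splits)
  have "sum id {p, b, c} = sum id {x, y, z}" using e by simp
  with d dd s show "p \<noteq> b \<and> b \<noteq> c \<and> p \<noteq> c \<and> p + b + c = 0" by (simp add: add.assoc)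
qed (auto simp: is_line_def)

definition third_point :: "pt set \<Rightarrow> pt" where
  "third_point P = - sum id P"

lemma a_line_iff_third_point: "a_line p P \<longleftrightarrow> card P = 2 \<and> third_point P = p"
proof
  assume "a_line p P"
  then obtain b c where "P = {b, c}" "b \<noteq> c" "p + b + c = 0"
    unfolding a_line_def is_line_insert_iff by blast
  moreover from this have "- (b + c) = p"
    by (metis add.assoc add.commute neg_eq_iff_add_eq_0)
  ultimately show "card P = 2 \<and> third_point P = p"
    by (simp add: third_point_def)
next
  assume third: "card P = 2 \<and> third_point P = p"
  then obtain b c where P: "P = {b, c}" "b \<noteq> c"
    unfolding card_2_iff by blast
  then have "- (b + c) = p" using third by (simp add: third_point_def)
  then have sum: "p + b + c = 0"
    by (metis add.assoc add.commute neg_eq_iff_add_eq_0)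
  have "p \<noteq> b"
  proof
    assume "p = b"
    with sum have "b + b + c = 0" by (simp only:)
    with P(2) show False using double_add_eq_zero_imp_eq by metis
  qed
  moreover have "p \<noteq> c"
  proof
    assume "p = c"
    with sum have "c + c + b = 0" by (simp only: ac_simps)
    with P(2) show False using double_add_eq_zero_imp_eq by metis
  qed
  ultimately show "a_line p P" unfolding a_line_def is_line_insert_iff using P sum by blast
qed

lemma a_line_eq:
  assumes "a_line p P" "x \<in> P"
  shows "P = {x, - p - x}"
proof -
  obtain b c where P: "P = {b, c}" and sum: "p + b + c = 0"
    using assms(1) unfolding a_line_def is_line_insert_iff by blast
  from assms(2) P consider "x = b" | "x = c" by blast
  then show ?thesis
  proof cases
    case 1
    with add_add_eq_0_imp(1)[OF sum] P show ?thesis by (simp only:)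
  next
    case 2
    with add_add_eq_0_imp(2)[OF sum] P show ?thesis by (simp only: insert_commute)
  qed
qed

lemma a_line_imp_is_line_insert: "a_line p P \<Longrightarrow> is_line (insert p P)"
  unfolding a_line_def by blast

lemma a_line_not_mem: "a_line p P \<Longrightarrow> p \<notin> P"
  unfolding a_line_def is_line_insert_iff by blast

lemma a_line_diff_cases:
  assumes "a_line a Q" "w \<in> Q" "z \<in> Q"
  shows "w - a = z - a \<or> w - a = - (z - a)"
proof -
  have "w = z \<or> w = - a - z" using a_line_eq[OF assms(1,3)] assms(2) by blast
  then show ?thesis using partner_diff[of a z] by (elim disjE) (simp_all only: simp_thms)
qed

definition dot :: "pt \<Rightarrow> pt \<Rightarrow> 3" where
  "dot u x = (\<Sum>i\<in>UNIV. u $ i * x $ i)"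

lemma dot_add: "dot u (x + y) = dot u x + dot u y"
  by (simp add: dot_def algebra_simps sum.distrib)

lemma dot_minus: "dot u (- x) = - dot u x"
  by (simp add: dot_def sum_negf)

lemma dot_diff: "dot u (x - y) = dot u x - dot u y"
  by (simp add: dot_def algebra_simps sum_subtractf)

lemma dot_diff_left: "dot (u - v) x = dot u x - dot v x"
  by (simp add: dot_def algebra_simps sum_subtractf)

lemma cohyperplanar_if_dot_vanishes:
  assumes "d \<noteq> 0" "\<forall>w\<in>S. dot d (w - a) = 0"
  shows "cohyperplanar S"
proof -
  have "hyperplane {x. (\<Sum>i\<in>UNIV. d $ i * x $ i) = dot d a}"
    unfolding hyperplane_def using assms(1) by blast
  moreover have "S \<subseteq> {x. (\<Sum>i\<in>UNIV. d $ i * x $ i) = dot d a}"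
    using assms(2) by (auto simp: dot_diff simp flip: dot_def)
  ultimately show ?thesis unfolding cohyperplanar_def by blast
qed

lemma separating_functional:
  assumes lines: "\<And>Q. Q \<in> G \<Longrightarrow> a_line a Q" and card_G: "card G = 4"
    and not_cohyperplanar: "\<not> cohyperplanar (\<Union>G)" and P: "P \<in> G" "z \<in> P"
  shows "\<exists>u. dot u (z - a) = 1 \<and> (\<forall>w\<in>\<Union>(G - {P}). dot u (w - a) = 0)"
proof -
  define r where "r Q = (if Q = P then z else SOME w. w \<in> Q)" for Q
  have r_mem: "r Q \<in> Q" if "Q \<in> G" for Q
  proof -
    have "\<exists>w. w \<in> Q" using lines[OF that] unfolding a_line_def by blast
    then show ?thesis unfolding r_def using P(2) by (auto intro: someI_ex)
  qed
  have vanish: "dot u (w - a) = 0" if "Q \<in> G" "w \<in> Q" "dot u (r Q - a) = 0" for u Q w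
  proof -
    from a_line_diff_cases[OF lines that(2) r_mem] that(1)
    consider "w - a = r Q - a" | "w - a = - (r Q - a)" by blast
    then show ?thesis using that(3) by cases (simp_all only: dot_minus neg_equal_0_iff_equal)
  qed
  define \<phi> where "\<phi> u = (\<lambda>Q\<in>G. dot u (r Q - a))" for u
  have "inj \<phi>"
  proof (rule injI, rule ccontr)
    fix u v assume eq: "\<phi> u = \<phi> v" and "u \<noteq> v"
    have "dot (u - v) (r Q - a) = 0" if "Q \<in> G" for Q
      using fun_cong[OF eq, of Q] that by (simp add: \<phi>_def dot_diff_left)
    then have "\<forall>w\<in>\<Union>G. dot (u - v) (w - a) = 0" using vanish by blast
    with \<open>u \<noteq> v\<close> not_cohyperplanar show False
      using cohyperplanar_if_dot_vanishes[of "u - v"] by simp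
  qed
  have "finite G" using card_G by (simp add: card_ge_0_finite)
  \<comment> \<open>An injection between two sets of size 3^4.\<close>
  have "range \<phi> = (\<Pi>\<^sub>E Q\<in>G. UNIV)"
  proof (rule card_subset_eq)
    show "finite (\<Pi>\<^sub>E Q\<in>G. UNIV :: 3 set)" using \<open>finite G\<close> by (simp add: finite_PiE)
    show "range \<phi> \<subseteq> (\<Pi>\<^sub>E Q\<in>G. UNIV)" unfolding \<phi>_def by auto
    show "card (range \<phi>) = card (\<Pi>\<^sub>E Q\<in>G. UNIV :: 3 set)"
      using \<open>inj \<phi>\<close> \<open>finite G\<close> card_G by (simp add: card_image card_PiE)
  qed
  moreover have "(\<lambda>Q\<in>G. if Q = P then 1 else 0) \<in> (\<Pi>\<^sub>E Q\<in>G. UNIV)" by simp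
  ultimately have "(\<lambda>Q\<in>G. if Q = P then 1 else 0) \<in> range \<phi>" by (simp only:)
  then obtain u where u: "\<phi> u = (\<lambda>Q\<in>G. if Q = P then 1 else 0)" by (metis rangeE)
  have "dot u (z - a) = 1"
    using fun_cong[OF u, of P] P by (simp add: \<phi>_def r_def)
  moreover have "dot u (w - a) = 0" if "Q \<in> G" "Q \<noteq> P" "w \<in> Q" for Q w
  proof (rule vanish[OF that(1,3)])
    show "dot u (r Q - a) = 0" using fun_cong[OF u, of Q] that(1,2) by (simp add: \<phi>_def)
  qed
  ultimately show ?thesis by blast
qed

locale demicap_configuration =
  fixes a :: pt and Ls :: "pt set set" and D :: "pt set"
  assumes points_eq: "D = \<Union>Ls"
    and a_line_mem: "P \<in> Ls \<Longrightarrow> a_line a P"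
    and finite_lines: "finite Ls"
    and four_le_card: "4 \<le> card Ls"
    and independent: "Fs \<subseteq> Ls \<Longrightarrow> card Fs = 4 \<Longrightarrow> \<not> cohyperplanar (\<Union>Fs)"
    and cap_points: "cap D"
begin

lemma partner_line_mem: "x \<in> D \<Longrightarrow> {x, - a - x} \<in> Ls"
  using a_line_eq a_line_mem unfolding points_eq by blast

lemma anchor_notin: "a \<notin> D"
  using a_line_not_mem a_line_mem unfolding points_eq by blast

lemma a_line_subset_iff: "P \<subseteq> D \<Longrightarrow> a_line a P \<longleftrightarrow> P \<in> Ls"
proof
  assume "P \<subseteq> D" "a_line a P"
  then obtain x where "x \<in> P" "x \<in> D" unfolding a_line_def by blast
  then show "P \<in> Ls" using a_line_eq[OF \<open>a_line a P\<close> \<open>x \<in> P\<close>] partner_line_mem by simp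
qed (rule a_line_mem)

lemma lines_completed_anchor: "lines_completed a D = card Ls"
proof -
  have "{P. P \<subseteq> D \<and> a_line a P} = Ls" using a_line_subset_iff points_eq by auto
  then show ?thesis unfolding lines_completed_def by simp
qed

lemma exists_separating_functional:
  assumes x: "x \<in> D" and S: "S \<subseteq> D" "card S \<le> 3"
  shows "\<exists>u. dot u (x - a) = 1 \<and> (\<forall>w\<in>S - {x, - a - x}. dot u (w - a) = 0)"
proof -
  define L where "L w = {w, - a - w}" for w
  have L: "L w \<in> Ls" "w \<in> L w" if "w \<in> D" for w
    using partner_line_mem that by (auto simp: L_def)
  have "card (L ` insert x S) \<le> card (insert x S)" by (rule card_image_le) simp
  also have "\<dots> \<le> 4" using S(2) by (simp add: card_insert_if)
  finally have card_le: "card (L ` insert x S) \<le> 4" .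
  have sub: "L ` insert x S \<subseteq> Ls"
    by (rule image_subsetI) (use L(1) x S(1) in blast)
  obtain G where G: "L ` insert x S \<subseteq> G" "G \<subseteq> Ls" "card G = 4"
    using exists_subset_between[OF card_le four_le_card sub finite_lines] by blast
  have G_lines: "a_line a Q" if "Q \<in> G" for Q using G(2) a_line_mem that by blast
  have "L x \<in> G" using G(1) by blast
  with separating_functional[OF G_lines G(3) independent[OF G(2,3)] _ L(2)[OF x]]
  obtain u where u_x: "dot u (x - a) = 1" and u_0: "\<forall>w\<in>\<Union>(G - {L x}). dot u (w - a) = 0"
    by blast
  have "dot u (w - a) = 0" if w: "w \<in> S - {x, - a - x}" for w
  proof -
    have "w \<in> D" using w S(1) by blast
    have "L w \<in> G" using G(1) w by blast
    moreover have "L w \<noteq> L x" using L(2)[OF \<open>w \<in> D\<close>] w by (auto simp: L_def)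
    ultimately have "w \<in> \<Union>(G - {L x})" using L(2)[OF \<open>w \<in> D\<close>] by blast
    then show ?thesis using u_0 by blast
  qed
  with u_x show ?thesis by blast
qed

lemma sum_pair_mem:
  assumes mem: "x \<in> D" "y \<in> D" "x' \<in> D" "y' \<in> D"
    and "x \<noteq> y" "x' \<noteq> y'" "{x, y} \<notin> Ls" and sum: "x + y = x' + y'"
  shows "x \<in> {x', y'}"
proof (rule ccontr)
  assume x_notin: "x \<notin> {x', y'}"
  have "card {y, x', y'} \<le> length [y, x', y']"
    using card_length[of "[y, x', y']"] by (simp only: list.set)
  then obtain u where u_x: "dot u (x - a) = 1"
    and u_0: "\<forall>w\<in>{y, x', y'} - {x, - a - x}. dot u (w - a) = 0"
    using exists_separating_functional[OF mem(1), of "{y, x', y'}"] mem by auto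
  have u_val: "dot u (w - a) = (if w = - a - x then - 1 else 0)" if w: "w \<in> {y, x', y'}" for w
  proof cases
    assume w_eq: "w = - a - x"
    then have "w - a = - (x - a)" using partner_diff[of a x] by (simp only:)
    then have "dot u (w - a) = - 1" using u_x by (simp only: dot_minus)
    with w_eq show ?thesis by simp
  next
    assume w_ne: "w \<noteq> - a - x"
    have "w \<noteq> x" using w \<open>x \<noteq> y\<close> x_notin by auto
    with w w_ne u_0 show ?thesis by simp
  qed
  have "y \<noteq> - a - x" using \<open>{x, y} \<notin> Ls\<close> partner_line_mem[OF mem(1)] by auto
  have "(x - a) + (y - a) = (x' - a) + (y' - a)" using sum by (simp add: algebra_simps)
  then have "dot u (x - a) + dot u (y - a) = dot u (x' - a) + dot u (y' - a)"
    by (simp only: dot_add [symmetric])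
  \<comment> \<open>The right-hand side could only be 1 = -2 if x' = y' = -a-x.\<close>
  then have "1 = (if x' = - a - x then - 1 else 0) + (if y' = - a - x then - 1 else (0::3))"
    using u_x u_val[of y] u_val[of x'] u_val[of y'] \<open>y \<noteq> - a - x\<close> by simp
  then show False using \<open>x' \<noteq> y'\<close> by (auto split: if_splits)
qed

definition other_pairs :: "pt set set" where
  "other_pairs = {P. P \<subseteq> D \<and> card P = 2} - Ls"

lemma card_other_pairs: "card other_pairs = (card D choose 2) - card Ls"
proof -
  have "finite D"
    unfolding points_eq using finite_lines a_line_mem by (auto simp: a_line_def)
  moreover have "Ls \<subseteq> {P. P \<subseteq> D \<and> card P = 2}"
    using a_line_mem points_eq by (auto simp: a_line_iff_third_point)
  ultimately show ?thesis
    unfolding other_pairs_def using card_Diff_subset[OF finite_lines] n_subsets[of D 2] by simp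
qed

lemma inj_on_third_point: "inj_on third_point other_pairs"
proof (rule inj_onI)
  fix P Q assume P_mem: "P \<in> other_pairs" and Q_mem: "Q \<in> other_pairs"
    and eq: "third_point P = third_point Q"
  obtain x y where P: "P = {x, y}" "x \<noteq> y"
    using P_mem unfolding other_pairs_def card_2_iff by blast
  obtain x' y' where Q: "Q = {x', y'}" "x' \<noteq> y'"
    using Q_mem unfolding other_pairs_def card_2_iff by blast
  have "- (x + y) = - (x' + y')" using eq P Q by (simp add: third_point_def)
  then have sum: "x + y = x' + y'" by (simp only: neg_equal_iff_equal)
  have "x \<in> {x', y'}"
    using P_mem Q_mem P Q sum by (intro sum_pair_mem) (auto simp: other_pairs_def)
  then show "P = Q"
  proof
    assume "x = x'"
    with sum have "y = y'" by simp
    with \<open>x = x'\<close> P Q show "P = Q" by simp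
  next
    assume "x \<in> {y'}"
    with sum have "x = y'" "y = x'" by (simp_all add: add.commute)
    with P Q show "P = Q" by (simp add: insert_commute)
  qed
qed

lemma third_point_other_pair:
  assumes "P \<in> other_pairs"
  shows "third_point P \<notin> D" and "third_point P \<noteq> a"
proof -
  have P: "P \<subseteq> D" "P \<notin> Ls" "card P = 2" using assms by (auto simp: other_pairs_def)
  then have line: "a_line (third_point P) P" by (simp add: a_line_iff_third_point)
  show "third_point P \<notin> D"
  proof
    assume "third_point P \<in> D"
    with P(1) have "insert (third_point P) P \<subseteq> D" by simp
    with a_line_imp_is_line_insert[OF line] cap_points show False unfolding cap_def by blast
  qed
  show "third_point P \<noteq> a" using line P a_line_subset_iff by auto
qed

lemma lines_completed_off_anchor:
  assumes "p \<noteq> a"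
  shows "lines_completed p D = (if p \<in> third_point ` other_pairs then 1 else 0)"
proof -
  have "third_point P = a" if "P \<in> Ls" for P
    using a_line_mem[OF that] by (simp add: a_line_iff_third_point)
  then have fiber: "{P. P \<subseteq> D \<and> a_line p P} = {P \<in> other_pairs. third_point P = p}"
    using assms by (auto simp: other_pairs_def a_line_iff_third_point)
  show ?thesis
  proof (cases "p \<in> third_point ` other_pairs")
    case True
    then obtain P where "P \<in> other_pairs" "p = third_point P" by blast
    then have "{P \<in> other_pairs. third_point P = p} = {P}"
      using inj_on_third_point by (auto simp: inj_on_def)
    then show ?thesis unfolding lines_completed_def fiber using True by simp
  next
    case False
    then have "{P \<in> other_pairs. third_point P = p} = {}" by auto
    then show ?thesis unfolding lines_completed_def fiber using False by simp
  qed
qed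

lemma completing_one_eq:
  "{p. p \<notin> D \<and> lines_completed p D = 1} = third_point ` other_pairs"
proof (intro equalityI subsetI)
  fix p assume p: "p \<in> {p. p \<notin> D \<and> lines_completed p D = 1}"
  then have "p \<noteq> a" using lines_completed_anchor four_le_card by auto
  with p show "p \<in> third_point ` other_pairs"
    using lines_completed_off_anchor by (auto split: if_splits)
next
  fix p assume "p \<in> third_point ` other_pairs"
  then show "p \<in> {p. p \<notin> D \<and> lines_completed p D = 1}"
    using third_point_other_pair lines_completed_off_anchor by auto
qed

lemma completing_none_eq:
  "{p. p \<notin> D \<and> lines_completed p D = 0} = (UNIV - D) - insert a (third_point ` other_pairs)"
proof (intro equalityI subsetI)
  fix p assume p: "p \<in> {p. p \<notin> D \<and> lines_completed p D = 0}"
  then have "p \<noteq> a" using lines_completed_anchor four_le_card by auto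
  with p show "p \<in> (UNIV - D) - insert a (third_point ` other_pairs)"
    using lines_completed_off_anchor by (auto split: if_splits)
next
  fix p assume "p \<in> (UNIV - D) - insert a (third_point ` other_pairs)"
  then show "p \<in> {p. p \<notin> D \<and> lines_completed p D = 0}"
    using lines_completed_off_anchor by auto
qed

theorem card_completing_one:
  "card {p. p \<notin> D \<and> lines_completed p D = 1} = (card D choose 2) - card Ls"
  using completing_one_eq card_image[OF inj_on_third_point] card_other_pairs by simp

theorem card_completing_none:
  "card {p. p \<notin> D \<and> lines_completed p D = 0} = card (UNIV - D) - 1 - ((card D choose 2) - card Ls)"
proof -
  have sub: "insert a (third_point ` other_pairs) \<subseteq> UNIV - D"
    using anchor_notin third_point_other_pair by auto
  have "a \<notin> third_point ` other_pairs" using third_point_other_pair by auto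
  then have "card (insert a (third_point ` other_pairs)) = 1 + ((card D choose 2) - card Ls)"
    using card_image[OF inj_on_third_point] card_other_pairs by simp
  then show ?thesis using completing_none_eq card_Diff_subset[OF _ sub] by simp
qed

end

theorem corollary3p5:
  fixes D :: "pt set" and a :: pt
  assumes "demicap D a"
  shows "card (UNIV - D) = 71 \<and> a \<notin> D \<and> lines_completed a D = 5
    \<and> card {p. p \<notin> D \<and> lines_completed p D = 1} = 40
    \<and> card {p. p \<notin> D \<and> lines_completed p D = 0} = 30"
proof -
  obtain Ls where card_Ls: "card Ls = 5" and lines: "\<forall>P\<in>Ls. a_line a P" and D: "D = \<Union>Ls"
    and independent: "\<forall>Fs. Fs \<subseteq> Ls \<and> card Fs = 4 \<longrightarrow> \<not> cohyperplanar (\<Union>Fs)"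
    and cap: "cap D" and card_D: "card D = 10"
    using assms unfolding demicap_def by blast
  interpret demicap_configuration a Ls D
    using card_Ls lines D independent cap by unfold_locales (auto intro: card_ge_0_finite)
  have "card (UNIV - D) = 71" using card_D by (simp add: card_Diff_subset card_ge_0_finite)
  then show ?thesis
    using anchor_notin lines_completed_anchor card_completing_one card_completing_none card_D card_Ls
    by (simp add: choose_two)
qed

end
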